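(* Let $\Lambda$ and $\Lambda'$ be any permutation local limits. Then there exists a sequence of permutations $(\varphi_j)_{j\in\mathbb{N}}$ that converges locally to $\Lambda$ such that the sequence of inverse permutations $(\varphi_j^{-1})_{j\in\mathbb{N}}$ converges locally to $\Lambda'$.
   Context: Let $S$ be the set of all finite permutations. For $\pi\in S_k$ and $\sigma\in S_n$ with $k\le n$, the local density $\rho_k(\pi,\sigma)$ is the number of $i\in\{1,\dots,n-k+1\}$ such that $\sigma(i)\dots\sigma(i+k-1)$ is order-isomorphic to $\pi$, divided by $n-k+1$. A sequence $(\sigma_j)$ with $|\sigma_j|\to\infty$ converges locally to $\Lambda\in[0,1]^S$ if $\rho_{|\pi|}(\pi,\sigma_j)\to\Lambda_\pi$ for every $\pi\in S$. A permutation local limit is a vector $\Lambda\in[0,1]^S$ which is the local limit of some locally convergent sequence of permutations. $\varphi^{-1}$ denotes the inverse permutation. *)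

theory Defs
  imports Complex_Main
begin

text \<open>A permutation of size n is represented as the list
  [sigma(1), ..., sigma(n)] shifted to values in {0..<n}; the set S of all
  finite permutations is the set of lists satisfying is_perm.\<close>

definition is_perm :: "nat list \<Rightarrow> bool" where
  "is_perm xs \<longleftrightarrow> distinct xs \<and> set xs = {0..<length xs}"

definition perm_inv :: "nat list \<Rightarrow> nat list" where
  "perm_inv s = map (\<lambda>v. THE i. i < length s \<and> s ! i = v) [0..<length s]"

definition occurs_at :: "nat list \<Rightarrow> nat list \<Rightarrow> nat \<Rightarrow> bool" where
  "occurs_at p s i \<longleftrightarrow> i + length p \<le> length s \<and>
     (\<forall>a < length p. \<forall>b < length p. (s ! (i + a) < s ! (i + b)) \<longleftrightarrow> (p ! a < p ! b))"

text \<open>Local density rho_k(p, s) with k = length p (meaningful for k \<le> length s).\<close>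
definition local_density :: "nat list \<Rightarrow> nat list \<Rightarrow> real" where
  "local_density p s =
     real (card {i. i + length p \<le> length s \<and> occurs_at p s i}) /
     real (length s - length p + 1)"

definition converges_locally :: "(nat \<Rightarrow> nat list) \<Rightarrow> (nat list \<Rightarrow> real) \<Rightarrow> bool" where
  "converges_locally sq L \<longleftrightarrow>
     (\<forall>j. is_perm (sq j)) \<and>
     filterlim (\<lambda>j. length (sq j)) at_top sequentially \<and>
     (\<forall>p. is_perm p \<longrightarrow> (\<lambda>j. local_density p (sq j)) \<longlonglongrightarrow> L p)"

definition perm_local_limit :: "(nat list \<Rightarrow> real) \<Rightarrow> bool" where
  "perm_local_limit L \<longleftrightarrow> (\<exists>sq. converges_locally sq L)"

end

theory Submission
  imports Defs
begin

text \<open>For permutations \<sigma> of size m and \<tau> of size n, the permutation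
  \<phi>(a m + b) = \<sigma>(b) n + \<tau>^-1(a)  (a < n, b < m)
  is the concatenation of n blocks, each order-isomorphic to \<sigma>, and its inverse is the
  same construction with the roles of \<sigma> and \<tau> exchanged, hence m blocks order-isomorphic
  to \<tau>. A pattern of length k occurs in a concatenation of blocks order-isomorphic to \<sigma>
  essentially as often as in the blocks themselves: only the at most k windows per block
  that straddle a boundary are unaccounted for. So the local densities of \<phi> and \<sigma> differ
  by O(k/m), those of \<phi>^-1 and \<tau> by O(k/n).\<close>

lemma block_index_le:
  assumes "a < n" "b \<le> (m::nat)"
  shows "a * m + b \<le> n * m"
proof -
  have "Suc a * m \<le> n * m" using assms(1) by (intro mult_le_mono1) simp
  then show ?thesis using assms(2) by simp
qed

lemma block_index_less: "a < n \<Longrightarrow> b < (m::nat) \<Longrightarrow> a * m + b < n * m"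
  using block_index_le[of a n "Suc b" m] by simp

lemma block_index_div: "b < (m::nat) \<Longrightarrow> (a * m + b) div m = a"
  and block_index_mod: "b < (m::nat) \<Longrightarrow> (a * m + b) mod m = b"
  by simp_all

lemma block_index_eq_iff:
  "b < (m::nat) \<Longrightarrow> b' < m \<Longrightarrow> a * m + b = a' * m + b' \<longleftrightarrow> a = a' \<and> b = b'"
  by (metis block_index_div block_index_mod)

lemma block_indexE:
  assumes "i < n * (m::nat)"
  obtains a b where "a < n" "b < m" "i = a * m + b"
proof
  have "m > 0" using assms by (cases m) auto
  then show "i div m < n" "i mod m < m" using assms by (auto simp: less_mult_imp_div_less)
qed simp

lemma is_permI:
  assumes "length xs = n" "\<And>i. i < n \<Longrightarrow> xs ! i < n"
    and "\<And>i j. i < n \<Longrightarrow> j < n \<Longrightarrow> xs ! i = xs ! j \<Longrightarrow> i = j"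
  shows "is_perm xs"
proof -
  have "distinct xs" using assms by (auto simp: distinct_conv_nth)
  moreover have "set xs \<subseteq> {0..<n}" using assms by (auto simp: in_set_conv_nth)
  ultimately have "set xs = {0..<n}"
    using assms(1) by (simp add: distinct_card card_subset_eq)
  with \<open>distinct xs\<close> assms(1) show ?thesis by (simp add: is_perm_def)
qed

lemma is_perm_nth_less: "is_perm s \<Longrightarrow> i < length s \<Longrightarrow> s ! i < length s"
  by (auto simp: is_perm_def)

lemma is_perm_nth_inject: "is_perm s \<Longrightarrow> i < length s \<Longrightarrow> j < length s \<Longrightarrow> s ! i = s ! j \<longleftrightarrow> i = j"
  by (simp add: is_perm_def nth_eq_iff_index_eq)

lemma length_perm_inv [simp]: "length (perm_inv s) = length s"
  by (simp add: perm_inv_def)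

lemma
  assumes "is_perm s" "v < length s"
  shows perm_inv_nth_less: "perm_inv s ! v < length s"
    and nth_perm_inv: "s ! (perm_inv s ! v) = v"
proof -
  have "v \<in> set s" using assms by (simp add: is_perm_def)
  then obtain i where i: "i < length s" "s ! i = v" by (auto simp: in_set_conv_nth)
  with assms(1) have "\<exists>!i. i < length s \<and> s ! i = v"
    by (auto simp: is_perm_nth_inject)
  moreover have "perm_inv s ! v = (THE i. i < length s \<and> s ! i = v)"
    using assms(2) by (simp add: perm_inv_def)
  ultimately show "perm_inv s ! v < length s" "s ! (perm_inv s ! v) = v"
    using theI'[of "\<lambda>i. i < length s \<and> s ! i = v"] by simp_all
qed

lemma perm_inv_nth: "is_perm s \<Longrightarrow> i < length s \<Longrightarrow> perm_inv s ! (s ! i) = i"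
  by (metis is_perm_nth_inject is_perm_nth_less nth_perm_inv perm_inv_nth_less)

lemma perm_inv_eqI:
  assumes "is_perm s" "length t = length s" "\<And>i. i < length s \<Longrightarrow> t ! (s ! i) = i"
  shows "perm_inv s = t"
proof (rule nth_equalityI)
  fix v assume "v < length (perm_inv s)"
  then show "perm_inv s ! v = t ! v"
    using assms by (metis length_perm_inv nth_perm_inv perm_inv_nth_less)
qed (simp add: assms(2))

section \<open>Pattern occurrences in concatenated blocks\<close>

definition order_iso_blocks :: "nat \<Rightarrow> nat list \<Rightarrow> nat list \<Rightarrow> bool" where
  "order_iso_blocks c \<sigma> s \<longleftrightarrow> length s = c * length \<sigma> \<and>
     (\<forall>a < c. \<forall>b < length \<sigma>. \<forall>b' < length \<sigma>.
        s ! (a * length \<sigma> + b) < s ! (a * length \<sigma> + b') \<longleftrightarrow> \<sigma> ! b < \<sigma> ! b')"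

lemma length_order_iso_blocks: "order_iso_blocks c \<sigma> s \<Longrightarrow> length s = c * length \<sigma>"
  by (simp add: order_iso_blocks_def)

definition occurrences :: "nat list \<Rightarrow> nat list \<Rightarrow> nat set" where
  "occurrences p s = {i. occurs_at p s i}"

lemma occurrences_subset: "occurrences p s \<subseteq> {..length s - length p}"
  by (auto simp: occurrences_def occurs_at_def)

lemma finite_occurrences: "finite (occurrences p s)"
  using occurrences_subset by (rule finite_subset) simp

lemma card_occurrences_le: "card (occurrences p s) \<le> length s - length p + 1"
  using card_mono[OF _ occurrences_subset] by fastforce

lemma occurs_at_fits: "occurs_at p s i \<Longrightarrow> i + length p \<le> length s"
  by (simp add: occurs_at_def)

lemma occurs_at_less_length: "occurs_at p s i \<Longrightarrow> p \<noteq> [] \<Longrightarrow> i < length s"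
  by (cases p) (auto simp: occurs_at_def)

lemma local_density_eq: "local_density p s = card (occurrences p s) / (length s - length p + 1)"
  by (simp add: local_density_def occurrences_def occurs_at_def)

lemma occurs_at_order_iso_blocks:
  assumes "order_iso_blocks c \<sigma> s" "a < c" "b + length p \<le> length \<sigma>"
  shows "occurs_at p s (a * length \<sigma> + b) \<longleftrightarrow> occurs_at p \<sigma> b"
proof -
  have "a * length \<sigma> + b + length p \<le> length s"
    using block_index_le[OF assms(2,3)] length_order_iso_blocks[OF assms(1)] by (simp add: add.assoc)
  with assms show ?thesis by (auto simp: order_iso_blocks_def occurs_at_def add.assoc)
qed

lemma card_occurrences_order_iso_blocks_ge:
  assumes blocks: "order_iso_blocks c \<sigma> s" and "p \<noteq> []"
  shows "c * card (occurrences p \<sigma>) \<le> card (occurrences p s)"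
proof -
  let ?f = "\<lambda>(a, b). a * length \<sigma> + b"
  have in_block: "b < length \<sigma>" if "b \<in> occurrences p \<sigma>" for b
    using that occurs_at_less_length \<open>p \<noteq> []\<close> by (auto simp: occurrences_def)
  have "inj_on ?f ({..<c} \<times> occurrences p \<sigma>)"
    by (rule inj_onI) (auto dest!: in_block simp: block_index_eq_iff)
  moreover have "?f ` ({..<c} \<times> occurrences p \<sigma>) \<subseteq> occurrences p s"
    using occurs_at_order_iso_blocks[OF blocks] occurs_at_fits by (auto simp: occurrences_def)
  ultimately have "card ({..<c} \<times> occurrences p \<sigma>) \<le> card (occurrences p s)"
    using card_inj_on_le finite_occurrences by blast
  then show ?thesis by (simp add: card_cartesian_product)
qed

lemma card_occurrences_order_iso_blocks_le:
  assumes blocks: "order_iso_blocks c \<sigma> s" and "p \<noteq> []"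
  shows "card (occurrences p s) \<le> c * (card (occurrences p \<sigma>) + length p)"
proof -
  let ?f = "\<lambda>(a, b). a * length \<sigma> + b"
  let ?B = "occurrences p \<sigma> \<union> {length \<sigma> - length p..<length \<sigma>}"
  have "occurrences p s \<subseteq> ?f ` ({..<c} \<times> ?B)"
  proof
    fix i assume i: "i \<in> occurrences p s"
    then have "i < c * length \<sigma>"
      using occurs_at_less_length[OF _ \<open>p \<noteq> []\<close>, of s i] length_order_iso_blocks[OF blocks]
      by (simp add: occurrences_def)
    then obtain a b where ab: "a < c" "b < length \<sigma>" "i = a * length \<sigma> + b"
      by (rule block_indexE)
    have "b \<in> ?B"
    proof (cases "b + length p \<le> length \<sigma>")
      case True
      then show ?thesis
        using i ab occurs_at_order_iso_blocks[OF blocks ab(1) True] by (simp add: occurrences_def)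
    qed (use ab in auto)
    with ab show "i \<in> ?f ` ({..<c} \<times> ?B)" by force
  qed
  then have "card (occurrences p s) \<le> card ({..<c} \<times> ?B)"
    by (intro surj_card_le) (simp_all add: finite_occurrences)
  also have "\<dots> \<le> c * (card (occurrences p \<sigma>) + length p)"
  proof -
    have "card ?B \<le> card (occurrences p \<sigma>) + length p"
      using card_Un_le[of "occurrences p \<sigma>" "{length \<sigma> - length p..<length \<sigma>}"] by simp
    then show ?thesis by (simp add: card_cartesian_product)
  qed
  finally show ?thesis .
qed

lemma block_ratio_estimate:
  fixes n m k C X :: real
  assumes "n \<ge> 1" "k \<ge> 1" "k \<le> m" "0 \<le> C" "C \<le> m - k + 1" "n * C \<le> X" "X \<le> n * (C + k)"
  shows "\<bar>X / (n * m - k + 1) - C / (m - k + 1)\<bar> \<le> k / (m - k + 1)"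
proof -
  define M where "M = m - k + 1"
  define D where "D = n * m - k + 1"
  have M: "1 \<le> M" "M \<le> m" "C \<le> M" using assms by (simp_all add: M_def)
  have "n * M \<le> D"
    using mult_nonneg_nonneg[of "n - 1" "k - 1"] assms by (simp add: M_def D_def algebra_simps)
  moreover have "D \<le> n * m" using assms by (simp add: D_def)
  moreover have "n * M > 0" using assms M by simp
  ultimately have D: "n * M \<le> D" "D \<le> n * m" "D > 0" by simp_all
  have "X / D \<le> n * (C + k) / (n * M)"
    using assms D M by (intro frac_le) simp_all
  also have "\<dots> = C / M + k / M" using assms by (simp add: add_divide_distrib)
  finally have upper: "X / D \<le> C / M + k / M" .
  have "C * (m - M) \<le> m * k"
    using mult_mono[of C m "m - M" k] M assms by (simp add: M_def)
  then have "C / M - k / M \<le> C / m"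
    using M by (simp add: field_simps)
  also have "\<dots> = n * C / (n * m)" using assms by simp
  also have "\<dots> \<le> X / D"
  proof (rule frac_le)
    show "0 \<le> X" using assms mult_nonneg_nonneg[of n C] by linarith
  qed (use assms D in simp_all)
  finally have lower: "C / M - k / M \<le> X / D" .
  from upper lower show ?thesis unfolding M_def D_def by linarith
qed

lemma local_density_Nil [simp]: "local_density [] s = 1"
proof -
  have "occurrences [] s = {..length s}" by (auto simp: occurrences_def occurs_at_def)
  then show ?thesis by (simp add: local_density_eq)
qed

lemma local_density_order_iso_blocks:
  assumes blocks: "order_iso_blocks c \<sigma> s" and "c > 0" and "length p \<le> length \<sigma>"
  shows "\<bar>local_density p s - local_density p \<sigma>\<bar> \<le> length p / (length \<sigma> - length p + 1)"
proof (cases "p = []")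
  case False
  let ?X = "card (occurrences p s)" and ?C = "card (occurrences p \<sigma>)"
  have lengths: "real (length \<sigma> - length p + 1) = real (length \<sigma>) - real (length p) + 1"
    "real (length s - length p + 1) = real c * real (length \<sigma>) - real (length p) + 1"
    using assms length_order_iso_blocks[OF blocks] block_index_le[of 0 c "length p" "length \<sigma>"]
    by simp_all
  have counts: "real c * ?C \<le> ?X" "?X \<le> real c * (?C + length p)"
    using card_occurrences_order_iso_blocks_ge[OF blocks False]
      card_occurrences_order_iso_blocks_le[OF blocks False]
    by (simp_all flip: of_nat_mult of_nat_add)
  have "real ?C \<le> real (length \<sigma>) - real (length p) + 1"
    using card_occurrences_le[of p \<sigma>] lengths(1) by linarith
  moreover have "length p \<ge> 1" using False by (cases p) auto
  ultimately show ?thesis unfolding local_density_eq lengths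
    by (intro block_ratio_estimate) (use assms counts in simp_all)
qed simp

lemma converges_locally_order_iso_blocks:
  assumes conv: "converges_locally t L"
    and perm: "\<And>j. is_perm (s j)"
    and blocks: "\<And>j. order_iso_blocks (c j) (t j) (s j)"
    and pos: "eventually (\<lambda>j. c j > 0) sequentially"
  shows "converges_locally s L"
  unfolding converges_locally_def
proof (intro conjI allI impI perm)
  have t_long: "filterlim (\<lambda>j. length (t j)) at_top sequentially"
    using conv by (simp add: converges_locally_def)
  then show "filterlim (\<lambda>j. length (s j)) at_top sequentially"
    by (rule filterlim_at_top_mono) (use pos in \<open>eventually_elim, simp add: length_order_iso_blocks[OF blocks]\<close>)
  fix p assume "is_perm p"
  let ?g = "\<lambda>j. real (length p) / real (length (t j) - length p + 1)"
  have "filterlim (\<lambda>j. length (t j) - length p + 1) at_top sequentially"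
    by (rule filterlim_compose[OF filterlim_add_const_nat_at_top
          filterlim_compose[OF filterlim_minus_const_nat_at_top t_long]])
  then have g_0: "?g \<longlonglongrightarrow> 0"
    by (intro tendsto_divide_0[OF tendsto_const] filterlim_at_top_imp_at_infinity
        filterlim_compose[OF filterlim_real_sequentially])
  have "eventually (\<lambda>j. length p \<le> length (t j)) sequentially"
    using t_long by (simp add: filterlim_at_top)
  with pos have "eventually (\<lambda>j. \<bar>local_density p (s j) - local_density p (t j)\<bar> \<le> ?g j) sequentially"
    by eventually_elim (rule local_density_order_iso_blocks[OF blocks])
  then have "(\<lambda>j. local_density p (s j) - local_density p (t j)) \<longlonglongrightarrow> 0"
    by (intro tendsto_0_le[OF g_0, where K = 1]) (auto elim: eventually_mono)
  moreover have "(\<lambda>j. local_density p (t j)) \<longlonglongrightarrow> L p"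
    using conv \<open>is_perm p\<close> by (simp add: converges_locally_def)
  ultimately show "(\<lambda>j. local_density p (s j)) \<longlonglongrightarrow> L p"
    using tendsto_add by fastforce
qed

section \<open>The block product of two permutations\<close>

definition block_product :: "nat list \<Rightarrow> nat list \<Rightarrow> nat list" where
  "block_product \<sigma> \<tau> =
     map (\<lambda>i. \<sigma> ! (i mod length \<sigma>) * length \<tau> + perm_inv \<tau> ! (i div length \<sigma>))
       [0..<length \<tau> * length \<sigma>]"

lemma length_block_product [simp]: "length (block_product \<sigma> \<tau>) = length \<tau> * length \<sigma>"
  by (simp add: block_product_def)

lemma block_product_nth:
  assumes "a < length \<tau>" "b < length \<sigma>"
  shows "block_product \<sigma> \<tau> ! (a * length \<sigma> + b) = \<sigma> ! b * length \<tau> + perm_inv \<tau> ! a"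
  using block_index_less[OF assms] block_index_div[OF assms(2)] block_index_mod[OF assms(2)]
  by (simp add: block_product_def)

lemma block_product_nth_less:
  assumes "is_perm \<sigma>" "is_perm \<tau>" "a < length \<tau>" "b < length \<sigma>"
  shows "block_product \<sigma> \<tau> ! (a * length \<sigma> + b) < length \<tau> * length \<sigma>"
  using block_index_less[OF is_perm_nth_less[OF assms(1,4)] perm_inv_nth_less[OF assms(2,3)]]
  by (simp add: block_product_nth assms(3,4) mult.commute)

lemma block_product_swap_nth:
  assumes "is_perm \<sigma>" "is_perm \<tau>" "a < length \<tau>" "b < length \<sigma>"
  shows "block_product \<tau> \<sigma> ! (block_product \<sigma> \<tau> ! (a * length \<sigma> + b)) = a * length \<sigma> + b"
  using assms by (simp add: block_product_nth perm_inv_nth_less is_perm_nth_less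
      nth_perm_inv perm_inv_nth)

lemma
  assumes "is_perm \<sigma>" "is_perm \<tau>"
  shows is_perm_block_product: "is_perm (block_product \<sigma> \<tau>)"
    and perm_inv_block_product: "perm_inv (block_product \<sigma> \<tau>) = block_product \<tau> \<sigma>"
proof -
  have left_inverse: "block_product \<tau> \<sigma> ! (block_product \<sigma> \<tau> ! i) = i"
    if "i < length \<tau> * length \<sigma>" for i
    using that by (rule block_indexE) (simp add: block_product_swap_nth assms)
  show "is_perm (block_product \<sigma> \<tau>)"
  proof (rule is_permI[OF length_block_product])
    show "block_product \<sigma> \<tau> ! i < length \<tau> * length \<sigma>" if "i < length \<tau> * length \<sigma>" for i
      using that by (rule block_indexE) (simp add: block_product_nth_less assms)
    show "i = j" if "i < length \<tau> * length \<sigma>" "j < length \<tau> * length \<sigma>"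
      and "block_product \<sigma> \<tau> ! i = block_product \<sigma> \<tau> ! j" for i j
      using left_inverse that by metis
  qed
  then show "perm_inv (block_product \<sigma> \<tau>) = block_product \<tau> \<sigma>"
    by (rule perm_inv_eqI) (auto intro: left_inverse)
qed

lemma order_iso_blocks_block_product:
  "order_iso_blocks (length \<tau>) \<sigma> (block_product \<sigma> \<tau>)"
  unfolding order_iso_blocks_def by (auto simp: block_product_nth)

lemma converges_locally_block_product:
  assumes "converges_locally \<sigma> L" "converges_locally \<tau> L'"
  shows "converges_locally (\<lambda>j. block_product (\<sigma> j) (\<tau> j)) L"
proof (rule converges_locally_order_iso_blocks[OF assms(1)])
  show "is_perm (block_product (\<sigma> j) (\<tau> j))" for j
    using assms by (simp add: converges_locally_def is_perm_block_product)
  have "filterlim (\<lambda>j. length (\<tau> j)) at_top sequentially"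
    using assms(2) by (simp add: converges_locally_def)
  then have "eventually (\<lambda>j. 1 \<le> length (\<tau> j)) sequentially"
    by (simp add: filterlim_at_top)
  then show "eventually (\<lambda>j. length (\<tau> j) > 0) sequentially"
    by (rule eventually_mono) auto
qed (rule order_iso_blocks_block_product)

theorem mainTheorem11:
  fixes L L' :: "nat list \<Rightarrow> real"
  assumes "perm_local_limit L" and "perm_local_limit L'"
  shows "\<exists>phi. converges_locally phi L \<and> converges_locally (\<lambda>j. perm_inv (phi j)) L'"
proof -
  obtain \<sigma> \<tau> where \<sigma>: "converges_locally \<sigma> L" and \<tau>: "converges_locally \<tau> L'"
    using assms by (auto simp: perm_local_limit_def)
  have "perm_inv (block_product (\<sigma> j) (\<tau> j)) = block_product (\<tau> j) (\<sigma> j)" for j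
    using \<sigma> \<tau> by (simp add: converges_locally_def perm_inv_block_product)
  then show ?thesis
    using converges_locally_block_product[OF \<sigma> \<tau>] converges_locally_block_product[OF \<tau> \<sigma>]
    by auto
qed

end
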